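(* For every type theory $\mathcal T$ and $\mathcal R\in\{\equiv,=_\beta,=_{\beta\eta}\}$: if $B\vdash^{\mathcal T}_{\mathcal R}\Delta:\sigma$, then $\Delta$ is strongly normalizing with respect to $\to$, i.e. there is no infinite reduction sequence $\Delta\to\Delta_1\to\Delta_2\to\cdots$.
   Context: Type atoms: a set $\mathbb{A}$ of symbols; $\omega$ denotes a distinguished atom (the universal type). Intersection types over $\mathbb A$: $\sigma::= a\mid\sigma\to\sigma\mid\sigma\cap\sigma$ ($a\in\mathbb A$). An intersection type theory $\mathcal T$ over $\mathbb A$ is a set of inequalities $\sigma\le\tau$ (written $\sigma\le_{\mathcal T}\tau$) closed under (refl) $\sigma\le\sigma$; (incl) $\sigma\cap\tau\le\sigma$ and $\sigma\cap\tau\le\tau$; (glb) $\rho\le\sigma$ and $\rho\le\tau$ imply $\rho\le\sigma\cap\tau$; (trans) $\sigma\le\tau$ and $\tau\le\rho$ imply $\sigma\le\rho$. $\Delta$-terms: $\Delta::=u_\Delta\mid x\mid\lambda x{:}\sigma.\Delta\mid\Delta\,\Delta\mid\langle\Delta,\Delta\rangle\mid pr_1\Delta\mid pr_2\Delta\mid\Delta^\sigma$, where for every (not necessarily typable) $\Delta$-term $\Delta$ there is a constant $u_\Delta$. The essence $\|\Delta\|$ is the pure $\lambda$-term defined by $\|x\|=x$, $\|u_\Delta\|=\|\Delta\|$, $\|\Delta^\sigma\|=\|\Delta\|$, $\|\lambda x{:}\sigma.\Delta\|=\lambda x.\|\Delta\|$, $\|\Delta_1\Delta_2\|=\|\Delta_1\|\,\|\Delta_2\|$,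 $\|\langle\Delta_1,\Delta_2\rangle\|=\|\Delta_1\|$, $\|pr_i\Delta\|=\|\Delta\|$. Let $\mathcal R$ be one of $\equiv$ (syntactic identity up to $\alpha$), $=_\beta$, $=_{\beta\eta}$ on pure $\lambda$-terms. A basis $B$ is a finite set of declarations $x{:}\sigma$ with distinct variables. The typed system $\Delta^{\mathcal T}_{\mathcal R}$ derives $B\vdash^{\mathcal T}_{\mathcal R}\Delta:\sigma$ by: (top) $B\vdash u_\Delta:\omega$ if $\omega\in\mathbb A$; (ax) $B\vdash x:\sigma$ if $x{:}\sigma\in B$; ($\to$I) from $B,x{:}\sigma\vdash\Delta:\tau$ infer $B\vdash\lambda x{:}\sigma.\Delta:\sigma\to\tau$; ($\to$E) from $B\vdash\Delta_1:\sigma\to\tau$ and $B\vdash\Delta_2:\sigma$ infer $B\vdash\Delta_1\Delta_2:\tau$; ($\cap$I) from $B\vdash\Delta_1:\sigma$, $B\vdash\Delta_2:\tau$ and $\|\Delta_1\|\mathrel{\mathcal R}\|\Delta_2\|$ infer $B\vdash\langle\Delta_1,\Delta_2\rangle:\sigma\cap\tau$; ($\cap$E$_1$) from $B\vdash\Delta:\sigma\cap\tau$ infer $B\vdash pr_1\Delta:\sigma$; ($\cap$E$_2$) from $B\vdash\Delta:\sigma\cap\tau$ infer $B\vdash pr_2\Delta:\tau$; ($\le_{\mathcal T}$) from $B\vdash\Delta:\sigma$ and $\sigma\le_{\mathcal T}\tau$ infer $B\vdash\Delta^\tau:\tau$. Substitution $\Delta_1[\Delta_2/x]$ is capture-avoiding,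 with $u_{\Delta_1}[\Delta_2/x]=u_{\Delta_1[\Delta_2/x]}$ and $(\Delta_1^\sigma)[\Delta_2/x]=(\Delta_1[\Delta_2/x])^\sigma$. Notions of reduction: $(\beta)$ $(\lambda x{:}\sigma.\Delta_1)\Delta_2\to\Delta_1[\Delta_2/x]$; $(pr_i)$ $pr_i\langle\Delta_1,\Delta_2\rangle\to\Delta_i$ ($i=1,2$). ($(\lambda x{:}\sigma.\Delta_1)^\tau\Delta_2$ is not a redex.) $\to$ denotes the contextual closure of $(\beta)$ and $(pr_i)$, where no reduction is performed inside the index $\Delta$ of a constant $u_\Delta$. *)

theory Defs
  imports Main
begin

datatype 'a ity = Atom 'a | Arr "'a ity" "'a ity" | Inter "'a ity" "'a ity"

text \<open>An intersection type theory: a set of inequalities (sigma, tau), read sigma <= tau.\<close>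
definition type_theory :: "('a ity \<times> 'a ity) set \<Rightarrow> bool" where
  "type_theory T \<longleftrightarrow>
     (\<forall>s. (s, s) \<in> T) \<and>
     (\<forall>s t. (Inter s t, s) \<in> T \<and> (Inter s t, t) \<in> T) \<and>
     (\<forall>r s t. (r, s) \<in> T \<longrightarrow> (r, t) \<in> T \<longrightarrow> (r, Inter s t) \<in> T) \<and>
     (\<forall>s t r. (s, t) \<in> T \<longrightarrow> (t, r) \<in> T \<longrightarrow> (s, r) \<in> T)"

datatype lterm = LVar nat | LApp lterm lterm | LAbs lterm

primrec llift :: "lterm \<Rightarrow> nat \<Rightarrow> lterm" where
  "llift (LVar i) k = (if i < k then LVar i else LVar (Suc i))"
| "llift (LApp s t) k = LApp (llift s k) (llift t k)"
| "llift (LAbs s) k = LAbs (llift s (Suc k))"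

primrec lsubst :: "lterm \<Rightarrow> lterm \<Rightarrow> nat \<Rightarrow> lterm" where
  "lsubst (LVar i) s k = (if k < i then LVar (i - 1) else if i = k then s else LVar i)"
| "lsubst (LApp t u) s k = LApp (lsubst t s k) (lsubst u s k)"
| "lsubst (LAbs t) s k = LAbs (lsubst t (llift s 0) (Suc k))"

inductive lbeta :: "lterm \<Rightarrow> lterm \<Rightarrow> bool" where
  beta: "lbeta (LApp (LAbs s) t) (lsubst s t 0)"
| appL: "lbeta s t \<Longrightarrow> lbeta (LApp s u) (LApp t u)"
| appR: "lbeta s t \<Longrightarrow> lbeta (LApp u s) (LApp u t)"
| abs: "lbeta s t \<Longrightarrow> lbeta (LAbs s) (LAbs t)"

inductive leta :: "lterm \<Rightarrow> lterm \<Rightarrow> bool" where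
  eta: "leta (LAbs (LApp (llift s 0) (LVar 0))) s"
| appL: "leta s t \<Longrightarrow> leta (LApp s u) (LApp t u)"
| appR: "leta s t \<Longrightarrow> leta (LApp u s) (LApp u t)"
| abs: "leta s t \<Longrightarrow> leta (LAbs s) (LAbs t)"

text \<open>The three relations R on pure terms: syntactic identity (up to alpha, i.e. equality
  of de Bruijn terms), beta-conversion, beta-eta-conversion.\<close>
datatype rel = Syn | BetaConv | BetaEtaConv

fun relR :: "rel \<Rightarrow> lterm \<Rightarrow> lterm \<Rightarrow> bool" where
  "relR Syn = (=)"
| "relR BetaConv = equivclp lbeta"
| "relR BetaEtaConv = equivclp (sup lbeta leta)"

datatype 'a dterm =
    DU "'a dterm"                 \<comment> \<open>the constant u_Delta\<close>
  | DVar nat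
  | DLam "'a ity" "'a dterm"
  | DApp "'a dterm" "'a dterm"
  | DPair "'a dterm" "'a dterm"
  | DPr1 "'a dterm"
  | DPr2 "'a dterm"
  | DAnn "'a dterm" "'a ity"

primrec ess :: "'a dterm \<Rightarrow> lterm" where
  "ess (DU d) = ess d"
| "ess (DVar i) = LVar i"
| "ess (DLam s d) = LAbs (ess d)"
| "ess (DApp d e) = LApp (ess d) (ess e)"
| "ess (DPair d e) = ess d"
| "ess (DPr1 d) = ess d"
| "ess (DPr2 d) = ess d"
| "ess (DAnn d s) = ess d"

primrec dlift :: "'a dterm \<Rightarrow> nat \<Rightarrow> 'a dterm" where
  "dlift (DU d) k = DU (dlift d k)"
| "dlift (DVar i) k = (if i < k then DVar i else DVar (Suc i))"
| "dlift (DLam s d) k = DLam s (dlift d (Suc k))"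
| "dlift (DApp d e) k = DApp (dlift d k) (dlift e k)"
| "dlift (DPair d e) k = DPair (dlift d k) (dlift e k)"
| "dlift (DPr1 d) k = DPr1 (dlift d k)"
| "dlift (DPr2 d) k = DPr2 (dlift d k)"
| "dlift (DAnn d s) k = DAnn (dlift d k) s"

text \<open>Capture-avoiding substitution; it goes inside the index of constants u_Delta.\<close>
primrec dsubst :: "'a dterm \<Rightarrow> 'a dterm \<Rightarrow> nat \<Rightarrow> 'a dterm" where
  "dsubst (DU d) e k = DU (dsubst d e k)"
| "dsubst (DVar i) e k = (if k < i then DVar (i - 1) else if i = k then e else DVar i)"
| "dsubst (DLam s d) e k = DLam s (dsubst d (dlift e 0) (Suc k))"
| "dsubst (DApp d1 d2) e k = DApp (dsubst d1 e k) (dsubst d2 e k)"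
| "dsubst (DPair d1 d2) e k = DPair (dsubst d1 e k) (dsubst d2 e k)"
| "dsubst (DPr1 d) e k = DPr1 (dsubst d e k)"
| "dsubst (DPr2 d) e k = DPr2 (dsubst d e k)"
| "dsubst (DAnn d s) e k = DAnn (dsubst d e k) s"

text \<open>One-step reduction: contextual closure of beta and pr_i, never inside u_Delta.\<close>
inductive dred :: "'a dterm \<Rightarrow> 'a dterm \<Rightarrow> bool" where
  beta: "dred (DApp (DLam s d1) d2) (dsubst d1 d2 0)"
| pr1: "dred (DPr1 (DPair d1 d2)) d1"
| pr2: "dred (DPr2 (DPair d1 d2)) d2"
| lam: "dred d d' \<Longrightarrow> dred (DLam s d) (DLam s d')"
| appL: "dred d d' \<Longrightarrow> dred (DApp d e) (DApp d' e)"
| appR: "dred e e' \<Longrightarrow> dred (DApp d e) (DApp d e')"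
| pairL: "dred d d' \<Longrightarrow> dred (DPair d e) (DPair d' e)"
| pairR: "dred e e' \<Longrightarrow> dred (DPair d e) (DPair d e')"
| prj1: "dred d d' \<Longrightarrow> dred (DPr1 d) (DPr1 d')"
| prj2: "dred d d' \<Longrightarrow> dred (DPr2 d) (DPr2 d')"
| ann: "dred d d' \<Longrightarrow> dred (DAnn d s) (DAnn d' s)"

text \<open>omega = Some w means the distinguished atom w (omega) is in the atom set;
  omega = None means it is not. A basis is a de Bruijn context (list of types).\<close>
inductive has_type :: "'a option \<Rightarrow> ('a ity \<times> 'a ity) set \<Rightarrow> rel \<Rightarrow> 'a ity list
    \<Rightarrow> 'a dterm \<Rightarrow> 'a ity \<Rightarrow> bool" for omega T R where
  top: "omega = Some w \<Longrightarrow> has_type omega T R B (DU d) (Atom w)"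
| ax: "i < length B \<Longrightarrow> has_type omega T R B (DVar i) (B ! i)"
| arrI: "has_type omega T R (s # B) d t \<Longrightarrow> has_type omega T R B (DLam s d) (Arr s t)"
| arrE: "has_type omega T R B d1 (Arr s t) \<Longrightarrow> has_type omega T R B d2 s
          \<Longrightarrow> has_type omega T R B (DApp d1 d2) t"
| interI: "has_type omega T R B d1 s \<Longrightarrow> has_type omega T R B d2 t
          \<Longrightarrow> relR R (ess d1) (ess d2) \<Longrightarrow> has_type omega T R B (DPair d1 d2) (Inter s t)"
| interE1: "has_type omega T R B d (Inter s t) \<Longrightarrow> has_type omega T R B (DPr1 d) s"
| interE2: "has_type omega T R B d (Inter s t) \<Longrightarrow> has_type omega T R B (DPr2 d) t"
| sub: "has_type omega T R B d s \<Longrightarrow> (s, t) \<in> T \<Longrightarrow> has_type omega T R B (DAnn d t) t"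

end

theory Submission
  imports Defs
begin

text \<open>Tait--Girard reducibility. Interpret each type as a reducibility candidate: atoms as the
  strongly normalizing terms, arrows and intersections by the usual logical relations over
  application and projections. Every typed term, under any substitution of reducible terms,
  is reducible, hence strongly normalizing. Constants \<open>u\<^sub>\<Delta>\<close> and annotated terms
  \<open>\<Delta>\<^sup>\<tau>\<close> never form redexes with their context, so they are reducible at every type as soon
  as they are strongly normalizing; this is why neither the axioms of the type theory nor the
  side condition of the intersection rule play any role.\<close>

text \<open>A definition rather than the abbreviation \<open>termip\<close>: the simplifier would eta-expand the
  converse relation inside \<open>termip r\<close>, after which library rules about \<open>termip\<close> no longer
  unify.\<close>
definition SN :: "('a \<Rightarrow> 'a \<Rightarrow> bool) \<Rightarrow> 'a \<Rightarrow> bool" where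
  "SN r = termip r"

lemma SNI: "(\<And>y. r x y \<Longrightarrow> SN r y) \<Longrightarrow> SN r x"
  unfolding SN_def by (rule accp.accI) simp

lemma SN_step: "SN r x \<Longrightarrow> r x y \<Longrightarrow> SN r y"
  unfolding SN_def by (erule accp_downward) simp

lemma SN_induct [consumes 1, case_names step]:
  assumes "SN r x" and "\<And>x. SN r x \<Longrightarrow> (\<And>y. r x y \<Longrightarrow> P y) \<Longrightarrow> P x"
  shows "P x"
  using assms(1)[unfolded SN_def]
proof (induct rule: accp.induct)
  case (accI x)
  have "SN r x"
    by (rule SNI) (use accI.hyps(1) in \<open>simp add: SN_def\<close>)
  then show ?case
    using assms(2) accI.hyps(2) by simp
qed

lemma SN_imp_no_infinite_chain:
  assumes "SN r x"
  shows "\<not> (\<exists>f. f 0 = x \<and> (\<forall>i. r (f i) (f (Suc i))))"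
  using assms
proof (induct rule: SN_induct)
  case (step x)
  show ?case
  proof
    assume "\<exists>f. f 0 = x \<and> (\<forall>i. r (f i) (f (Suc i)))"
    then obtain f where "f 0 = x" and chain: "\<forall>i. r (f i) (f (Suc i))" by blast
    then have "r x (f 1)" by (metis One_nat_def)
    moreover have "\<exists>g. g 0 = f 1 \<and> (\<forall>i. r (g i) (g (Suc i)))"
      using chain by (intro exI[of _ "\<lambda>i. f (Suc i)"]) simp
    ultimately show False using step.hyps by blast
  qed
qed

lemma SN_preimage:
  assumes "SN r (h x)" and mono: "\<And>y z. r y z \<Longrightarrow> r (h y) (h z)"
  shows "SN r x"
proof -
  have "SN r x" if "SN r z" "z = h x" for z x
    using that
  proof (induct arbitrary: x rule: SN_induct)
    case (step z)
    show ?case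
      by (rule SNI) (use step mono in auto)
  qed
  then show ?thesis using assms(1) by blast
qed

lemma SN_pair_induct [consumes 2, case_names step]:
  assumes "SN r a" and "SN r' b"
    and step: "\<And>a b. (\<And>a'. r a a' \<Longrightarrow> P a' b) \<Longrightarrow> (\<And>b'. r' b b' \<Longrightarrow> P a b') \<Longrightarrow> P a b"
  shows "P a b"
  using assms(1,2)
proof (induct arbitrary: b rule: SN_induct)
  case (step a)
  from \<open>SN r' b\<close> show ?case
  proof (induct rule: SN_induct)
    case (step b)
    show ?case
      by (rule assms(3)) (use step \<open>\<And>a' b. r a a' \<Longrightarrow> SN r' b \<Longrightarrow> P a' b\<close> in auto)
  qed
qed

declare dsubst.simps(2) [simp del]

lemma dsubst_DVar_eq [simp]: "dsubst (DVar k) u k = u"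
  by (simp add: dsubst.simps(2))

lemma dsubst_DVar_gt [simp]: "i < j \<Longrightarrow> dsubst (DVar j) u i = DVar (j - 1)"
  by (simp add: dsubst.simps(2))

lemma dsubst_DVar_lt [simp]: "j < i \<Longrightarrow> dsubst (DVar j) u i = DVar j"
  by (simp add: dsubst.simps(2))

lemma dlift_dlift: "i \<le> k \<Longrightarrow> dlift (dlift t i) (Suc k) = dlift (dlift t k) i"
  by (induct t arbitrary: i k) auto

lemma dlift_dsubst_lt:
  "i \<le> j \<Longrightarrow> dlift (dsubst t s j) i = dsubst (dlift t i) (dlift s i) (Suc j)"
  by (induct t arbitrary: i j s) (auto simp: dsubst.simps(2) dlift_dlift)

lemma dsubst_dlift [simp]: "dsubst (dlift t k) s k = t"
  by (induct t arbitrary: k s) simp_all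

lemma dsubst_dsubst:
  "i \<le> j \<Longrightarrow> dsubst (dsubst t (dlift v i) (Suc j)) (dsubst u v j) i = dsubst (dsubst t u i) v j"
  by (induct t arbitrary: i j u v)
    (auto simp: dsubst.simps(2) dlift_dlift [symmetric] dlift_dsubst_lt split: nat.split)

lemma dred_dsubst: "dred d d' \<Longrightarrow> dred (dsubst d e k) (dsubst d' e k)"
  by (induct arbitrary: e k rule: dred.induct) (simp_all add: dsubst_dsubst [symmetric] dred.intros)

definition subst_up :: "(nat \<Rightarrow> 'a dterm) \<Rightarrow> nat \<Rightarrow> 'a dterm" where
  "subst_up \<theta> i = (case i of 0 \<Rightarrow> DVar 0 | Suc j \<Rightarrow> dlift (\<theta> j) 0)"

definition subst_cons :: "'a dterm \<Rightarrow> (nat \<Rightarrow> 'a dterm) \<Rightarrow> nat \<Rightarrow> 'a dterm" where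
  "subst_cons e \<theta> i = (case i of 0 \<Rightarrow> e | Suc j \<Rightarrow> \<theta> j)"

primrec dpsubst :: "'a dterm \<Rightarrow> (nat \<Rightarrow> 'a dterm) \<Rightarrow> 'a dterm" where
  "dpsubst (DU d) \<theta> = DU (dpsubst d \<theta>)"
| "dpsubst (DVar i) \<theta> = \<theta> i"
| "dpsubst (DLam s d) \<theta> = DLam s (dpsubst d (subst_up \<theta>))"
| "dpsubst (DApp d e) \<theta> = DApp (dpsubst d \<theta>) (dpsubst e \<theta>)"
| "dpsubst (DPair d e) \<theta> = DPair (dpsubst d \<theta>) (dpsubst e \<theta>)"
| "dpsubst (DPr1 d) \<theta> = DPr1 (dpsubst d \<theta>)"
| "dpsubst (DPr2 d) \<theta> = DPr2 (dpsubst d \<theta>)"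
| "dpsubst (DAnn d s) \<theta> = DAnn (dpsubst d \<theta>) s"

lemma subst_up_DVar [simp]: "subst_up DVar = DVar"
  by (rule ext) (simp add: subst_up_def split: nat.split)

lemma dpsubst_DVar [simp]: "dpsubst d DVar = d"
  by (induct d) simp_all

lemma dsubst_dpsubst: "dsubst (dpsubst d \<theta>) e k = dpsubst d (\<lambda>i. dsubst (\<theta> i) e k)"
proof (induct d arbitrary: \<theta> e k)
  case (DLam s d)
  have "(\<lambda>i. dsubst (subst_up \<theta> i) (dlift e 0) (Suc k)) = subst_up (\<lambda>i. dsubst (\<theta> i) e k)"
    by (rule ext) (simp add: subst_up_def dlift_dsubst_lt split: nat.split)
  then show ?case using DLam by simp
qed simp_all

lemma dsubst_dpsubst_subst_up: "dsubst (dpsubst d (subst_up \<theta>)) e 0 = dpsubst d (subst_cons e \<theta>)"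
proof -
  have "(\<lambda>i. dsubst (subst_up \<theta> i) e 0) = subst_cons e \<theta>"
    by (rule ext) (simp add: subst_up_def subst_cons_def split: nat.split)
  then show ?thesis by (simp add: dsubst_dpsubst)
qed

inductive_cases dred_DUE: "dred (DU d) x"
inductive_cases dred_DVarE: "dred (DVar i) x"
inductive_cases dred_DLamE: "dred (DLam s d) x"
inductive_cases dred_DAppE: "dred (DApp d e) x"
inductive_cases dred_DPairE: "dred (DPair d e) x"
inductive_cases dred_DPr1E: "dred (DPr1 d) x"
inductive_cases dred_DPr2E: "dred (DPr2 d) x"
inductive_cases dred_DAnnE: "dred (DAnn d s) x"

text \<open>Annotated terms are neutral since \<open>(\<lambda>x:\<sigma>. \<Delta>)\<^sup>\<tau> \<Delta>'\<close> is not a redex.\<close>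
fun neutral :: "'a dterm \<Rightarrow> bool" where
  "neutral (DLam _ _) = False"
| "neutral (DPair _ _) = False"
| "neutral _ = True"

definition candidate :: "('a dterm \<Rightarrow> bool) \<Rightarrow> bool" where
  "candidate P \<longleftrightarrow>
     (\<forall>d. P d \<longrightarrow> SN dred d) \<and>
     (\<forall>d d'. P d \<longrightarrow> dred d d' \<longrightarrow> P d') \<and>
     (\<forall>d. neutral d \<longrightarrow> (\<forall>d'. dred d d' \<longrightarrow> P d') \<longrightarrow> P d)"

lemma candidate_imp_SN: "candidate P \<Longrightarrow> P d \<Longrightarrow> SN dred d"
  unfolding candidate_def by blast

lemma candidate_dred: "candidate P \<Longrightarrow> P d \<Longrightarrow> dred d d' \<Longrightarrow> P d'"
  unfolding candidate_def by blast

lemma candidate_neutral: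
  "candidate P \<Longrightarrow> neutral d \<Longrightarrow> (\<And>d'. dred d d' \<Longrightarrow> P d') \<Longrightarrow> P d"
  unfolding candidate_def by blast

lemma candidate_DVar: "candidate P \<Longrightarrow> P (DVar i)"
  by (erule candidate_neutral) (auto elim: dred_DVarE)

lemma candidate_SN_dred: "candidate (SN dred)"
  unfolding candidate_def by (auto intro: SN_step SNI)

lemma candidate_Arr:
  assumes P: "candidate P" and Q: "candidate Q"
  shows "candidate (\<lambda>d. \<forall>e. P e \<longrightarrow> Q (DApp d e))"
  unfolding candidate_def
proof (intro conjI allI impI)
  fix d assume "\<forall>e. P e \<longrightarrow> Q (DApp d e)"
  then have "SN dred (DApp d (DVar 0))"
    using candidate_DVar[OF P] candidate_imp_SN[OF Q] by blast
  then show "SN dred d"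
    by (rule SN_preimage) (rule dred.appL)
next
  fix d d' e assume "\<forall>e. P e \<longrightarrow> Q (DApp d e)" "dred d d'" "P e"
  then show "Q (DApp d' e)"
    by (blast intro: candidate_dred[OF Q] dred.appL)
next
  fix d e
  assume "neutral d" and reducts: "\<forall>d'. dred d d' \<longrightarrow> (\<forall>e. P e \<longrightarrow> Q (DApp d' e))" and "P e"
  from \<open>P e\<close> have "SN dred e" by (rule candidate_imp_SN[OF P])
  then show "Q (DApp d e)" using \<open>P e\<close>
  proof (induct rule: SN_induct)
    case (step e)
    show ?case
    proof (rule candidate_neutral[OF Q])
      fix x assume "dred (DApp d e) x"
      then show "Q x"
      proof (rule dred_DAppE)
        fix s b assume "d = DLam s b"
        then show ?thesis using \<open>neutral d\<close> by simp
      next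
        fix d' assume "x = DApp d' e" "dred d d'"
        then show ?thesis using reducts \<open>P e\<close> by blast
      next
        fix e' assume "x = DApp d e'" "dred e e'"
        then show ?thesis using step candidate_dred[OF P] by blast
      qed
    qed simp
  qed
qed

lemma candidate_Inter:
  assumes P: "candidate P" and Q: "candidate Q"
  shows "candidate (\<lambda>d. P (DPr1 d) \<and> Q (DPr2 d))"
  unfolding candidate_def
proof (intro conjI allI impI)
  fix d assume "P (DPr1 d) \<and> Q (DPr2 d)"
  then have "SN dred (DPr1 d)" by (blast intro: candidate_imp_SN[OF P])
  then show "SN dred d"
    by (rule SN_preimage) (rule dred.prj1)
next
  fix d d' assume "P (DPr1 d) \<and> Q (DPr2 d)" "dred d d'"
  then show "P (DPr1 d')" "Q (DPr2 d')"
    by (blast intro: candidate_dred[OF P] candidate_dred[OF Q] dred.prj1 dred.prj2)+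
next
  fix d assume "neutral d" and reducts: "\<forall>d'. dred d d' \<longrightarrow> P (DPr1 d') \<and> Q (DPr2 d')"
  show "P (DPr1 d)"
    by (rule candidate_neutral[OF P]) (use \<open>neutral d\<close> reducts in \<open>auto elim: dred_DPr1E\<close>)
  show "Q (DPr2 d)"
    by (rule candidate_neutral[OF Q]) (use \<open>neutral d\<close> reducts in \<open>auto elim: dred_DPr2E\<close>)
qed

fun reducible :: "'a ity \<Rightarrow> 'a dterm \<Rightarrow> bool" where
  "reducible (Atom a) d = SN dred d"
| "reducible (Arr s t) d = (\<forall>e. reducible s e \<longrightarrow> reducible t (DApp d e))"
| "reducible (Inter s t) d = (reducible s (DPr1 d) \<and> reducible t (DPr2 d))"

lemma candidate_reducible: "candidate (reducible \<tau>)"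
  by (induct \<tau>) (simp_all add: candidate_SN_dred candidate_Arr candidate_Inter)

lemma candidate_DU: "candidate P \<Longrightarrow> P (DU d)"
  by (erule candidate_neutral) (auto elim: dred_DUE)

lemma candidate_DAnn:
  assumes P: "candidate P" and "SN dred d"
  shows "P (DAnn d s)"
  using \<open>SN dred d\<close>
proof (induct rule: SN_induct)
  case (step d)
  show ?case
    by (rule candidate_neutral[OF P]) (use step in \<open>auto elim: dred_DAnnE\<close>)
qed

lemma candidate_beta_redex:
  assumes P: "candidate P" and Q: "candidate Q"
    and body: "\<forall>e. P e \<longrightarrow> Q (dsubst b e 0)" and "P e"
  shows "Q (DApp (DLam s b) e)"
proof -
  have "SN dred (dsubst b (DVar 0) 0)"
    using body candidate_DVar[OF P] candidate_imp_SN[OF Q] by blast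
  then have "SN dred b"
    by (rule SN_preimage) (rule dred_dsubst)
  moreover have "SN dred e"
    using \<open>P e\<close> by (rule candidate_imp_SN[OF P])
  ultimately show ?thesis
    using body \<open>P e\<close>
  proof (induct rule: SN_pair_induct)
    case (step b e)
    show ?case
    proof (rule candidate_neutral[OF Q])
      fix x assume "dred (DApp (DLam s b) e) x"
      then show "Q x"
      proof (rule dred_DAppE)
        fix s' b' assume "DLam s b = DLam s' b'" "x = dsubst b' e 0"
        then show ?thesis using step.prems by simp
      next
        fix d' assume "x = DApp d' e" "dred (DLam s b) d'"
        then obtain b' where "x = DApp (DLam s b') e" "dred b b'"
          by (auto elim: dred_DLamE)
        moreover have "\<forall>e. P e \<longrightarrow> Q (dsubst b' e 0)"
          using step.prems(1) \<open>dred b b'\<close> by (blast intro: candidate_dred[OF Q] dred_dsubst)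
        ultimately show ?thesis
          using step.hyps(1) step.prems(2) by blast
      next
        fix e' assume "x = DApp (DLam s b) e'" "dred e e'"
        then show ?thesis
          using step candidate_dred[OF P] by blast
      qed
    qed simp
  qed
qed

lemma candidate_pair_projections:
  assumes P: "candidate P" and Q: "candidate Q" and "P a" and "Q b"
  shows "P (DPr1 (DPair a b)) \<and> Q (DPr2 (DPair a b))"
proof -
  have "SN dred a" "SN dred b"
    using assms by (blast intro: candidate_imp_SN)+
  then show ?thesis
    using \<open>P a\<close> \<open>Q b\<close>
  proof (induct rule: SN_pair_induct)
    case (step a b)
    have reducts: "P (DPr1 x) \<and> Q (DPr2 x)" if "dred (DPair a b) x" for x
      using that step candidate_dred[OF P] candidate_dred[OF Q] by (auto elim: dred_DPairE)
    show ?case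
    proof
      show "P (DPr1 (DPair a b))"
        by (rule candidate_neutral[OF P])
          (use step.prems reducts in \<open>auto elim: dred_DPr1E\<close>)
      show "Q (DPr2 (DPair a b))"
        by (rule candidate_neutral[OF Q])
          (use step.prems reducts in \<open>auto elim: dred_DPr2E\<close>)
    qed
  qed
qed

lemma has_type_reducible:
  assumes "has_type omega T R B d \<sigma>" and "\<forall>i<length B. reducible (B ! i) (\<theta> i)"
  shows "reducible \<sigma> (dpsubst d \<theta>)"
  using assms
proof (induct arbitrary: \<theta> rule: has_type.induct)
  case (arrI s B d t)
  have "reducible t (dsubst (dpsubst d (subst_up \<theta>)) e 0)" if "reducible s e" for e
    using that arrI by (auto simp: dsubst_dpsubst_subst_up subst_cons_def nth_Cons split: nat.split)
  then show ?case
    by (auto intro: candidate_beta_redex candidate_reducible)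
next
  case (interI B d1 s d2 t)
  then have "reducible s (dpsubst d1 \<theta>)" "reducible t (dpsubst d2 \<theta>)"
    by blast+
  then show ?case
    by (simp add: candidate_pair_projections[OF candidate_reducible candidate_reducible])
next
  case (sub B d s t)
  then show ?case
    by (auto intro: candidate_DAnn candidate_imp_SN candidate_reducible)
qed (simp_all add: candidate_DU[OF candidate_reducible])

theorem mainTheorem13:
  fixes omega :: "'a option" and T :: "('a ity \<times> 'a ity) set" and R :: rel
    and B :: "'a ity list" and d :: "'a dterm" and \<sigma> :: "'a ity"
  assumes "type_theory T"
    and "has_type omega T R B d \<sigma>"
  shows "\<not> (\<exists>f. f 0 = d \<and> (\<forall>i. dred (f i) (f (Suc i))))"
proof -
  have "reducible \<sigma> (dpsubst d DVar)"
    using assms(2) by (rule has_type_reducible) (simp add: candidate_DVar candidate_reducible)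
  then have "SN dred d"
    by (simp add: candidate_imp_SN[OF candidate_reducible])
  then show ?thesis
    by (rule SN_imp_no_infinite_chain)
qed

end
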